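(* Let $G$ be a graph of order $n$ with minimum degree $\delta\geq 1$, let $\mu=\mu(G)$, and let $(x_1,\ldots,x_n)$ be a nonnegative unit eigenvector of the adjacency matrix of $G$ for the eigenvalue $\mu$. If $u$ is a vertex with $x_u=\min\{x_1,\ldots,x_n\}$, then \[ \mu(G-u)\geq\mu\left(1-\frac{1}{\mu^2/\delta+n-\delta-1}\right). \]
   Context: All graphs are finite and simple; $\mu(G)$ denotes the largest eigenvalue of the adjacency matrix of $G$; $G-u$ is the graph obtained by deleting vertex $u$; the eigenvector is indexed by the vertices of $G$. *)

theory Defs
  imports Complex_Main
begin

text \<open>A finite simple graph is given by a finite vertex set V and a symmetric,
  irreflexive adjacency relation E (only its restriction to V matters).\<close>

definition simple_graph :: "'a set \<Rightarrow> ('a \<Rightarrow> 'a \<Rightarrow> bool) \<Rightarrow> bool" where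
  "simple_graph V E \<longleftrightarrow> finite V \<and> V \<noteq> {} \<and>
     (\<forall>v\<in>V. \<forall>w\<in>V. E v w \<longleftrightarrow> E w v) \<and> (\<forall>v\<in>V. \<not> E v v)"

definition degree :: "'a set \<Rightarrow> ('a \<Rightarrow> 'a \<Rightarrow> bool) \<Rightarrow> 'a \<Rightarrow> nat" where
  "degree V E v = card {w \<in> V. E v w}"

definition min_degree :: "'a set \<Rightarrow> ('a \<Rightarrow> 'a \<Rightarrow> bool) \<Rightarrow> nat" where
  "min_degree V E = Min (degree V E ` V)"

definition adj_mult :: "'a set \<Rightarrow> ('a \<Rightarrow> 'a \<Rightarrow> bool) \<Rightarrow> ('a \<Rightarrow> real) \<Rightarrow> 'a \<Rightarrow> real" where
  "adj_mult V E x v = (\<Sum>w\<in>V. (if E v w then 1 else 0) * x w)"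

definition is_eigenvector :: "'a set \<Rightarrow> ('a \<Rightarrow> 'a \<Rightarrow> bool) \<Rightarrow> real \<Rightarrow> ('a \<Rightarrow> real) \<Rightarrow> bool" where
  "is_eigenvector V E lam x \<longleftrightarrow> (\<exists>v\<in>V. x v \<noteq> 0) \<and> (\<forall>v\<in>V. adj_mult V E x v = lam * x v)"

definition is_eigenvalue :: "'a set \<Rightarrow> ('a \<Rightarrow> 'a \<Rightarrow> bool) \<Rightarrow> real \<Rightarrow> bool" where
  "is_eigenvalue V E lam \<longleftrightarrow> (\<exists>x. is_eigenvector V E lam x)"

text \<open>Largest eigenvalue of the (real symmetric) adjacency matrix; all its
  eigenvalues are real.\<close>
definition spec_radius :: "'a set \<Rightarrow> ('a \<Rightarrow> 'a \<Rightarrow> bool) \<Rightarrow> real" where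
  "spec_radius V E = Max {lam. is_eigenvalue V E lam}"

end

theory Submission
  imports Defs "HOL-Analysis.Function_Topology" "HOL-Analysis.Convex"
begin

text \<open>Write \<open>t = x u\<close>. Restricting \<open>x\<close> to \<open>V - {u}\<close> in the Rayleigh quotient of
  \<open>G - u\<close> gives \<open>\<mu> (1 - 2 t\<^sup>2) \<le> \<mu>(G - u) (1 - t\<^sup>2)\<close>. At a vertex \<open>w\<close> of minimum degree
  \<open>\<delta>\<close>, Cauchy-Schwarz on \<open>\<mu> x w = \<Sum> x\<close> over the neighbours of \<open>w\<close> gives
  \<open>\<mu>\<^sup>2 t\<^sup>2 / \<delta> \<le> \<Sum> x\<^sup>2\<close> over those neighbours, while each of the other \<open>n - \<delta>\<close> vertices
  contributes at least \<open>t\<^sup>2\<close>; hence \<open>t\<^sup>2 (\<mu>\<^sup>2/\<delta> + n - \<delta>) \<le> 1\<close>, and the two estimates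
  combine to the bound. Since \<open>spec_radius\<close> is a maximum over the set of eigenvalues, the
  Rayleigh bound is obtained from a maximiser of the quadratic form on the unit sphere
  together with finiteness of the spectrum.\<close>

definition dot :: "'a set \<Rightarrow> ('a \<Rightarrow> real) \<Rightarrow> ('a \<Rightarrow> real) \<Rightarrow> real" where
  "dot W f g = (\<Sum>w\<in>W. f w * g w)"

definition adj_form :: "'a set \<Rightarrow> ('a \<Rightarrow> 'a \<Rightarrow> bool) \<Rightarrow> ('a \<Rightarrow> real) \<Rightarrow> real" where
  "adj_form W E f = dot W f (adj_mult W E f)"

lemma adj_mult_add_scaled:
  "adj_mult W E (\<lambda>w. f w + c * g w) v = adj_mult W E f v + c * adj_mult W E g v"
  unfolding adj_mult_def by (simp add: algebra_simps sum.distrib sum_distrib_left)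

lemma adj_mult_scale: "adj_mult W E (\<lambda>w. c * f w) v = c * adj_mult W E f v"
  unfolding adj_mult_def by (simp add: algebra_simps sum_distrib_left)

lemma adj_mult_cong: "(\<And>w. w \<in> W \<Longrightarrow> f w = g w) \<Longrightarrow> adj_mult W E f v = adj_mult W E g v"
  unfolding adj_mult_def by (auto intro!: sum.cong)

lemma adj_mult_eq_sum_neighbours:
  "finite W \<Longrightarrow> adj_mult W E f v = (\<Sum>w\<in>{w \<in> W. E v w}. f w)"
  unfolding adj_mult_def by (auto simp: sum.inter_filter intro: sum.cong)

lemma dot_cong:
  "(\<And>w. w \<in> W \<Longrightarrow> f w = f' w) \<Longrightarrow> (\<And>w. w \<in> W \<Longrightarrow> g w = g' w) \<Longrightarrow> dot W f g = dot W f' g'"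
  unfolding dot_def by (auto intro!: sum.cong)

lemma adj_form_cong: "(\<And>w. w \<in> W \<Longrightarrow> f w = g w) \<Longrightarrow> adj_form W E f = adj_form W E g"
  unfolding adj_form_def by (intro dot_cong adj_mult_cong)

lemma dot_commute: "dot W f g = dot W g f"
  unfolding dot_def by (simp add: mult.commute)

lemma dot_self_nonneg: "dot W f f \<ge> 0"
  unfolding dot_def by (auto intro: sum_nonneg)

lemma dot_self_eq_0_iff: "finite W \<Longrightarrow> dot W f f = 0 \<longleftrightarrow> (\<forall>w\<in>W. f w = 0)"
  unfolding dot_def by (simp add: sum_nonneg_eq_0_iff)

lemma dot_scale: "dot W (\<lambda>w. c * f w) (\<lambda>w. c * f w) = c\<^sup>2 * dot W f f"
  unfolding dot_def by (simp add: sum_distrib_left power2_eq_square algebra_simps)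

lemma adj_form_scale: "adj_form W E (\<lambda>w. c * f w) = c\<^sup>2 * adj_form W E f"
  unfolding adj_form_def dot_def adj_mult_scale
  by (simp add: sum_distrib_left power2_eq_square algebra_simps)

lemma dot_add_scaled:
  "dot W (\<lambda>w. f w + e * g w) (\<lambda>w. f w + e * g w) = dot W f f + 2 * e * dot W f g + e\<^sup>2 * dot W g g"
  unfolding dot_def by (simp add: sum.distrib sum_distrib_left power2_eq_square algebra_simps)

lemma dot_adj_mult_symmetric:
  assumes "\<forall>v\<in>W. \<forall>w\<in>W. E v w \<longleftrightarrow> E w v"
  shows "dot W (adj_mult W E f) g = dot W f (adj_mult W E g)"
proof -
  have "dot W (adj_mult W E f) g = (\<Sum>v\<in>W. \<Sum>w\<in>W. (if E v w then 1 else 0) * f w * g v)"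
    unfolding dot_def adj_mult_def by (simp add: sum_distrib_right)
  also have "\<dots> = (\<Sum>w\<in>W. \<Sum>v\<in>W. (if E w v then 1 else 0) * f w * g v)"
    using assms by (subst sum.swap) (intro sum.cong refl, auto)
  also have "\<dots> = dot W f (adj_mult W E g)"
    unfolding dot_def adj_mult_def by (simp add: sum_distrib_left algebra_simps)
  finally show ?thesis .
qed

lemma adj_form_add_scaled:
  assumes "\<forall>v\<in>W. \<forall>w\<in>W. E v w \<longleftrightarrow> E w v"
  shows "adj_form W E (\<lambda>w. f w + e * g w)
    = adj_form W E f + 2 * e * dot W (adj_mult W E f) g + e\<^sup>2 * adj_form W E g"
proof -
  have "adj_form W E (\<lambda>w. f w + e * g w) = adj_form W E f + e * dot W f (adj_mult W E g)
      + e * dot W g (adj_mult W E f) + e\<^sup>2 * adj_form W E g"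
    unfolding adj_form_def adj_mult_add_scaled unfolding dot_def
    by (simp add: sum.distrib sum_distrib_left power2_eq_square algebra_simps)
  then show ?thesis
    using dot_adj_mult_symmetric[OF assms] by (simp add: dot_commute[of W g])
qed

lemma adj_form_continuous: "continuous_on S (\<lambda>z. adj_form W E z)"
  and dot_self_continuous: "continuous_on S (\<lambda>z. dot W z z)"
  unfolding adj_form_def dot_def adj_mult_def
  by (intro continuous_intros continuous_on_subset[OF continuous_on_product_coordinates]; simp)+

lemma adj_form_attains_max_on_sphere:
  assumes fin: "finite W" and ne: "W \<noteq> {}"
  obtains z where "dot W z z = 1" and "\<And>y. dot W y y = 1 \<Longrightarrow> adj_form W E y \<le> adj_form W E z"
proof -
  \<comment> \<open>Functions vanishing off \<open>W\<close> with entries in \<open>[-1, 1]\<close> form a compact box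
    in the product topology that contains the relevant part of the unit sphere.\<close>
  define S :: "('a \<Rightarrow> real) set" where "S = PiE UNIV (\<lambda>w. if w \<in> W then {-1..1} else {0})"
  define K where "K = S \<inter> {z. dot W z z = 1}"
  have "compact S"
    using compactin_PiE[of "\<lambda>i. euclidean" UNIV "\<lambda>w. if w \<in> W then {-1..1::real} else {0}"]
    unfolding S_def euclidean_product_topology by auto
  moreover have "closed {z::'a \<Rightarrow> real. dot W z z = 1}"
    by (intro closed_Collect_eq dot_self_continuous continuous_on_const)
  ultimately have "compact K" unfolding K_def by auto
  obtain w0 where "w0 \<in> W" using ne by auto
  then have "(\<lambda>w. if w = w0 then 1 else 0) \<in> K"
    unfolding K_def S_def dot_def using fin by (auto simp: if_distrib cong: if_cong)
  then obtain z where zK: "z \<in> K" and zmax: "\<And>y. y \<in> K \<Longrightarrow> adj_form W E y \<le> adj_form W E z"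
    using continuous_attains_sup[OF \<open>compact K\<close> _ adj_form_continuous] by blast
  show thesis
  proof (rule that)
    show "dot W z z = 1" using zK unfolding K_def by simp
  next
    fix y assume y1: "dot W y y = 1"
    define y' where "y' = (\<lambda>w. if w \<in> W then y w else 0)"
    have "dot W y' y' = dot W y y" by (rule dot_cong) (simp_all add: y'_def)
    with y1 have "dot W y' y' = 1" by simp
    have "y' w \<in> {-1..1}" if "w \<in> W" for w
    proof -
      have "(y' w)\<^sup>2 \<le> dot W y' y'"
        unfolding dot_def power2_eq_square using fin that by (intro member_le_sum) auto
      then show ?thesis using \<open>dot W y' y' = 1\<close> abs_square_le_1[of "y' w"] by auto
    qed
    then have "y' \<in> S" unfolding S_def by (intro PiE_I) (auto simp: y'_def)
    then have "y' \<in> K" using \<open>dot W y' y' = 1\<close> unfolding K_def by simp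
    moreover have "adj_form W E y = adj_form W E y'" by (rule adj_form_cong) (simp add: y'_def)
    ultimately show "adj_form W E y \<le> adj_form W E z" using zmax by simp
  qed
qed

lemma adj_form_le_by_homogeneity:
  assumes fin: "finite W" and sphere: "\<And>y. dot W y y = 1 \<Longrightarrow> adj_form W E y \<le> lam"
  shows "adj_form W E y \<le> lam * dot W y y"
proof (cases "dot W y y = 0")
  case True
  then have "adj_form W E y = adj_form W E (\<lambda>_. 0)"
    using fin by (intro adj_form_cong) (simp add: dot_self_eq_0_iff)
  then show ?thesis using True by (simp add: adj_form_def dot_def)
next
  case False
  then have pos: "dot W y y > 0" using dot_self_nonneg[of W y] by linarith
  define c where "c = 1 / sqrt (dot W y y)"
  have c2: "c\<^sup>2 * dot W y y = 1" using pos by (simp add: c_def power_divide)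
  have "adj_form W E (\<lambda>w. c * y w) \<le> lam" by (rule sphere) (simp add: dot_scale c2)
  then have "c\<^sup>2 * adj_form W E y \<le> lam" by (simp add: adj_form_scale)
  also have "lam = c\<^sup>2 * (lam * dot W y y)" using c2 by (simp add: mult.left_commute)
  finally have "c\<^sup>2 * adj_form W E y \<le> c\<^sup>2 * (lam * dot W y y)" .
  moreover have "c\<^sup>2 > 0" using c2 by (cases "c = 0") auto
  ultimately show ?thesis by simp
qed

lemma eq_0_if_quadratic_nonpos:
  fixes a b :: real
  assumes "\<And>e. 2 * e * a + e\<^sup>2 * b \<le> 0" and "a \<ge> 0"
  shows "a = 0"
proof (rule ccontr)
  assume "a \<noteq> 0"
  define e where "e = a / (\<bar>b\<bar> + 1)"
  have "e > 0" and "e * \<bar>b\<bar> < a"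
    using \<open>a \<noteq> 0\<close> \<open>a \<ge> 0\<close> by (auto simp: e_def field_simps)
  moreover have "e * - \<bar>b\<bar> \<le> e * b"
    using \<open>e > 0\<close> by (intro mult_left_mono) auto
  ultimately have "2 * a + e * b > 0" using \<open>a \<ge> 0\<close> by simp
  with \<open>e > 0\<close> have "e * (2 * a + e * b) > 0" by simp
  then show False using assms(1)[of e] by (simp add: power2_eq_square algebra_simps)
qed

lemma rayleigh_maximizer_is_eigenvector:
  assumes fin: "finite W" and sym: "\<forall>v\<in>W. \<forall>w\<in>W. E v w \<longleftrightarrow> E w v"
    and z1: "dot W z z = 1" and max: "\<And>y. adj_form W E y \<le> adj_form W E z * dot W y y"
    and v: "v \<in> W"
  shows "adj_mult W E z v = adj_form W E z * z v"
proof -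
  define lam where "lam = adj_form W E z"
  define r where "r = (\<lambda>w. adj_mult W E z w - lam * z w)"
  \<comment> \<open>Perturbing \<open>z\<close> along the residual \<open>r\<close> changes the Rayleigh bound at first
    order by \<open>2 e |r|\<^sup>2\<close>, which maximality forces to be nonpositive for every \<open>e\<close>.\<close>
  have cross: "dot W (adj_mult W E z) r - lam * dot W z r = dot W r r"
    unfolding dot_def sum_distrib_left sum_subtractf[symmetric]
    by (intro sum.cong) (simp_all add: r_def algebra_simps)
  have "2 * e * dot W r r + e\<^sup>2 * (adj_form W E r - lam * dot W r r) \<le> 0" for e
    using max[of "\<lambda>w. z w + e * r w"]
    unfolding adj_form_add_scaled[OF sym] dot_add_scaled z1 lam_def[symmetric]
    using cross by (simp add: algebra_simps)
  then have "dot W r r = 0" using dot_self_nonneg by (rule eq_0_if_quadratic_nonpos)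
  then show ?thesis using fin v by (simp add: dot_self_eq_0_iff r_def lam_def)
qed

lemma rayleigh_eigenvalue:
  assumes fin: "finite W" and ne: "W \<noteq> {}" and sym: "\<forall>v\<in>W. \<forall>w\<in>W. E v w \<longleftrightarrow> E w v"
  obtains lam where "is_eigenvalue W E lam" and "\<And>y. adj_form W E y \<le> lam * dot W y y"
proof -
  obtain z where z1: "dot W z z = 1"
    and zmax: "\<And>y. dot W y y = 1 \<Longrightarrow> adj_form W E y \<le> adj_form W E z"
    using adj_form_attains_max_on_sphere[OF fin ne] by blast
  have bound: "adj_form W E y \<le> adj_form W E z * dot W y y" for y
    using fin zmax by (rule adj_form_le_by_homogeneity)
  have "\<exists>v\<in>W. z v \<noteq> 0" using z1 fin dot_self_eq_0_iff[of W z] by auto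
  with rayleigh_maximizer_is_eigenvector[OF fin sym z1 bound]
  have "is_eigenvalue W E (adj_form W E z)"
    unfolding is_eigenvalue_def is_eigenvector_def by blast
  then show thesis using bound by (rule that)
qed

lemma orthonormal_sum_sq_le_1:
  assumes fin: "finite W" and "finite I" and w: "w \<in> W"
    and orth: "\<And>i j. i \<in> I \<Longrightarrow> j \<in> I \<Longrightarrow> dot W (v i) (v j) = (if i = j then 1 else 0)"
  shows "(\<Sum>i\<in>I. (v i w)\<^sup>2) \<le> 1"
proof -
  define e where "e = (\<lambda>y. if y = w then 1 else (0::real))"
  define p where "p = (\<lambda>y. \<Sum>i\<in>I. v i w * v i y)"
  have e_dot: "dot W e f = f w" for f
  proof -
    have "dot W e f = (\<Sum>y\<in>W. if y = w then f y else 0)"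
      unfolding dot_def e_def by (intro sum.cong) auto
    then show ?thesis using fin w by simp
  qed
  have ep: "dot W e p = (\<Sum>i\<in>I. (v i w)\<^sup>2)" by (simp add: e_dot p_def power2_eq_square)
  have "dot W p p = (\<Sum>y\<in>W. \<Sum>i\<in>I. \<Sum>j\<in>I. v i w * v j w * (v i y * v j y))"
    unfolding dot_def p_def by (simp add: sum_product algebra_simps)
  also have "\<dots> = (\<Sum>i\<in>I. \<Sum>j\<in>I. \<Sum>y\<in>W. v i w * v j w * (v i y * v j y))"
    by (simp add: sum.swap[where A = W])
  also have "\<dots> = (\<Sum>i\<in>I. \<Sum>j\<in>I. v i w * v j w * dot W (v i) (v j))"
    unfolding dot_def by (simp add: sum_distrib_left)
  also have "\<dots> = (\<Sum>i\<in>I. (v i w)\<^sup>2)"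
    using \<open>finite I\<close> by (simp add: orth power2_eq_square if_distrib cong: if_cong)
  finally have pp: "dot W p p = (\<Sum>i\<in>I. (v i w)\<^sup>2)" .
  have "0 \<le> dot W (\<lambda>y. e y + (-1) * p y) (\<lambda>y. e y + (-1) * p y)" by (rule dot_self_nonneg)
  moreover have "dot W e e = 1" using e_dot[of e] by (simp add: e_def)
  ultimately show ?thesis unfolding dot_add_scaled ep pp by simp
qed

lemma is_eigenvalue_unit_eigenvector:
  assumes fin: "finite W" and "is_eigenvalue W E lam"
  obtains v where "\<And>w. w \<in> W \<Longrightarrow> adj_mult W E v w = lam * v w" and "dot W v v = 1"
proof -
  obtain x where nz: "\<exists>v\<in>W. x v \<noteq> 0" and eig: "\<forall>v\<in>W. adj_mult W E x v = lam * x v"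
    using assms(2) unfolding is_eigenvalue_def is_eigenvector_def by blast
  have "dot W x x > 0"
    using nz dot_self_eq_0_iff[OF fin, of x] dot_self_nonneg[of W x] by auto
  define c where "c = 1 / sqrt (dot W x x)"
  have c2: "c\<^sup>2 * dot W x x = 1" using \<open>dot W x x > 0\<close> by (simp add: c_def power_divide)
  show thesis
    by (rule that[of "\<lambda>w. c * x w"]) (simp_all add: adj_mult_scale eig dot_scale c2 mult.left_commute)
qed

text \<open>Unit eigenvectors for distinct eigenvalues of a symmetric matrix are orthonormal,
  so by Bessel's inequality there are at most \<open>card W\<close> eigenvalues.\<close>

lemma finite_eigenvalues:
  assumes fin: "finite W" and sym: "\<forall>v\<in>W. \<forall>w\<in>W. E v w \<longleftrightarrow> E w v"
  shows "finite {lam. is_eigenvalue W E lam}"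
proof (rule ccontr)
  assume "infinite {lam. is_eigenvalue W E lam}"
  then obtain F where F: "finite F" "card F = Suc (card W)" "F \<subseteq> {lam. is_eigenvalue W E lam}"
    using infinite_arbitrarily_large by blast
  have "\<forall>lam\<in>F. \<exists>v. (\<forall>w\<in>W. adj_mult W E v w = lam * v w) \<and> dot W v v = 1"
    using F(3) is_eigenvalue_unit_eigenvector[OF fin] by (metis mem_Collect_eq subsetD)
  then obtain v where eig: "\<And>lam w. lam \<in> F \<Longrightarrow> w \<in> W \<Longrightarrow> adj_mult W E (v lam) w = lam * v lam w"
    and unit: "\<And>lam. lam \<in> F \<Longrightarrow> dot W (v lam) (v lam) = 1"
    by metis
  have orth: "dot W (v i) (v j) = (if i = j then 1 else 0)" if "i \<in> F" "j \<in> F" for i j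
  proof (cases "i = j")
    case False
    have "i * dot W (v i) (v j) = dot W (adj_mult W E (v i)) (v j)"
      unfolding dot_def using eig[OF \<open>i \<in> F\<close>] by (simp add: sum_distrib_left algebra_simps)
    also have "\<dots> = dot W (v i) (adj_mult W E (v j))" by (rule dot_adj_mult_symmetric[OF sym])
    also have "\<dots> = j * dot W (v i) (v j)"
      unfolding dot_def using eig[OF \<open>j \<in> F\<close>] by (simp add: sum_distrib_left algebra_simps)
    finally show ?thesis using False by simp
  qed (use unit that in simp)
  have "real (card F) = (\<Sum>lam\<in>F. dot W (v lam) (v lam))" using unit by simp
  also have "\<dots> = (\<Sum>w\<in>W. \<Sum>lam\<in>F. (v lam w)\<^sup>2)"
    unfolding dot_def by (subst sum.swap) (simp add: power2_eq_square)
  also have "\<dots> \<le> (\<Sum>w\<in>W. 1)"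
    using orthonormal_sum_sq_le_1[OF fin F(1) _ orth] by (intro sum_mono) auto
  finally show False using F(2) by simp
qed

lemma adj_form_le_spec_radius:
  assumes fin: "finite W" and ne: "W \<noteq> {}" and sym: "\<forall>v\<in>W. \<forall>w\<in>W. E v w \<longleftrightarrow> E w v"
  shows "adj_form W E y \<le> spec_radius W E * dot W y y"
proof -
  obtain lam where "is_eigenvalue W E lam" and bound: "adj_form W E y \<le> lam * dot W y y"
    using rayleigh_eigenvalue[OF fin ne sym] by metis
  then have "lam \<le> spec_radius W E"
    unfolding spec_radius_def using finite_eigenvalues[OF fin sym] by (intro Max_ge) auto
  then show ?thesis using bound dot_self_nonneg[of W y] by (meson mult_right_mono order_trans)
qed

lemma dot_Diff_singleton: "finite V \<Longrightarrow> u \<in> V \<Longrightarrow> dot (V - {u}) f f = dot V f f - (f u)\<^sup>2"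
  unfolding dot_def by (simp add: sum_diff1 power2_eq_square)

lemma min_degree_le_degree: "finite V \<Longrightarrow> v \<in> V \<Longrightarrow> min_degree V E \<le> degree V E v"
  unfolding min_degree_def by simp

lemma min_degree_attained:
  assumes "finite V" and "V \<noteq> {}"
  obtains w where "w \<in> V" and "degree V E w = min_degree V E"
proof -
  have "min_degree V E \<in> degree V E ` V" unfolding min_degree_def using assms by (intro Min_in) auto
  then show thesis by (metis imageE that)
qed

lemma degree_le_card_minus_1:
  assumes "finite V" and "v \<in> V" and "\<not> E v v"
  shows "degree V E v \<le> card V - 1"
proof -
  have "{w \<in> V. E v w} \<subseteq> V - {v}" using assms by auto
  then show ?thesis
    unfolding degree_def using assms by (metis card_Diff_singleton card_mono finite_Diff)
qed

lemma min_degree_le_spec_radius: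
  assumes "simple_graph V E"
  shows "real (min_degree V E) \<le> spec_radius V E"
proof -
  have fin: "finite V" and ne: "V \<noteq> {}" and sym: "\<forall>v\<in>V. \<forall>w\<in>V. E v w \<longleftrightarrow> E w v"
    using assms unfolding simple_graph_def by auto
  have "real (card V) * min_degree V E \<le> (\<Sum>v\<in>V. real (degree V E v))"
    using sum_mono[of V "\<lambda>_. real (min_degree V E)"] min_degree_le_degree[OF fin] by simp
  also have "\<dots> = adj_form V E (\<lambda>_. 1)"
    unfolding adj_form_def dot_def degree_def using fin
    by (simp add: adj_mult_eq_sum_neighbours)
  also have "\<dots> \<le> spec_radius V E * real (card V)"
    using adj_form_le_spec_radius[OF fin ne sym, of "\<lambda>_. 1"] by (simp add: dot_def)
  finally show ?thesis using fin ne by (simp add: mult.commute card_gt_0_iff)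
qed

lemma min_entry_sq_bound:
  assumes fin: "finite V" and w: "w \<in> V" and eig: "adj_mult V E x w = mu * x w"
    and unit: "(\<Sum>v\<in>V. (x v)\<^sup>2) = 1" and "0 \<le> t" and below: "\<And>v. v \<in> V \<Longrightarrow> t \<le> x v"
    and "degree V E w > 0"
  shows "t\<^sup>2 * (mu\<^sup>2 / degree V E w + card V - degree V E w) \<le> 1"
proof -
  define N where "N = {v \<in> V. E w v}"
  define k where "k = degree V E w"
  have "N \<subseteq> V" and "card N = k" by (auto simp: N_def k_def degree_def)
  have sq_le: "t\<^sup>2 \<le> (x v)\<^sup>2" if "v \<in> V" for v
    using below[OF that] \<open>0 \<le> t\<close> by (intro power_mono) auto
  have "mu\<^sup>2 * t\<^sup>2 \<le> (mu * x w)\<^sup>2"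
    using sq_le[OF w] by (simp add: power_mult_distrib mult_left_mono)
  also have "\<dots> = (\<Sum>v\<in>N. x v)\<^sup>2" using eig fin by (simp add: adj_mult_eq_sum_neighbours N_def)
  also have "\<dots> \<le> k * (\<Sum>v\<in>N. (x v)\<^sup>2)"
    using sum_squared_le_sum_of_squares[of x N] \<open>card N = k\<close> by (simp add: mult.commute)
  finally have near: "mu\<^sup>2 / k * t\<^sup>2 \<le> (\<Sum>v\<in>N. (x v)\<^sup>2)"
    using \<open>degree V E w > 0\<close> by (simp add: k_def field_simps)
  have "k \<le> card V" using fin \<open>N \<subseteq> V\<close> \<open>card N = k\<close> card_mono by blast
  then have "(real (card V) - k) * t\<^sup>2 = (\<Sum>v\<in>V - N. t\<^sup>2)"
    using fin \<open>N \<subseteq> V\<close> \<open>card N = k\<close> by (simp add: card_Diff_subset finite_subset of_nat_diff)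
  also have "\<dots> \<le> (\<Sum>v\<in>V - N. (x v)\<^sup>2)" using sq_le by (intro sum_mono) auto
  finally have far: "(real (card V) - k) * t\<^sup>2 \<le> (\<Sum>v\<in>V - N. (x v)\<^sup>2)" .
  have "(\<Sum>v\<in>V. (x v)\<^sup>2) = (\<Sum>v\<in>V - N. (x v)\<^sup>2) + (\<Sum>v\<in>N. (x v)\<^sup>2)"
    using sum.subset_diff[OF \<open>N \<subseteq> V\<close> fin] .
  moreover have "t\<^sup>2 * (mu\<^sup>2 / k + card V - k) = mu\<^sup>2 / k * t\<^sup>2 + (real (card V) - k) * t\<^sup>2"
    by (simp add: algebra_simps)
  ultimately show ?thesis using near far unit by (simp add: k_def)
qed

text \<open>Deleting \<open>u\<close> removes the term \<open>x u\<close> from the eigenvector equation of each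
  neighbour of \<open>u\<close>; by symmetry these losses add up to \<open>x u * (\<mu> * x u)\<close>.\<close>

lemma adj_form_Diff_singleton:
  assumes fin: "finite V" and u: "u \<in> V" and sym: "\<forall>v\<in>V. \<forall>w\<in>V. E v w \<longleftrightarrow> E w v"
    and "\<not> E u u" and eig: "\<And>v. v \<in> V \<Longrightarrow> adj_mult V E x v = mu * x v"
  shows "adj_form (V - {u}) E x = mu * (dot V x x - 2 * (x u)\<^sup>2)"
proof -
  define W where "W = V - {u}"
  have row: "adj_mult W E x v = mu * x v - (if E v u then x u else 0)" if "v \<in> W" for v
  proof -
    have "adj_mult V E x v = (if E v u then x u else 0) + adj_mult W E x v"
      using sum.remove[OF fin u, of "\<lambda>w. (if E v w then 1 else 0) * x w"]
      by (simp add: W_def adj_mult_def)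
    with eig[of v] that show ?thesis by (simp add: W_def)
  qed
  have "adj_mult V E x u = (\<Sum>v\<in>W. (if E u v then 1 else 0) * x v)"
    using sum.remove[OF fin u, of "\<lambda>w. (if E u w then 1 else 0) * x w"] \<open>\<not> E u u\<close>
    by (simp add: W_def adj_mult_def)
  also have "\<dots> = (\<Sum>v\<in>W. if E v u then x v else 0)"
    using sym u by (intro sum.cong) (auto simp: W_def)
  finally have "adj_mult V E x u = (\<Sum>v\<in>W. if E v u then x v else 0)" .
  then have col: "(\<Sum>v\<in>W. x u * (if E v u then x v else 0)) = mu * (x u)\<^sup>2"
    using eig[OF u] by (simp add: sum_distrib_left[symmetric] power2_eq_square)
  have "adj_form W E x = (\<Sum>v\<in>W. mu * (x v * x v) - x u * (if E v u then x v else 0))"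
    unfolding adj_form_def dot_def by (intro sum.cong refl) (auto simp: row algebra_simps)
  also have "\<dots> = mu * dot W x x - mu * (x u)\<^sup>2"
    using col by (simp add: sum_subtractf dot_def sum_distrib_left)
  finally show ?thesis using fin u by (simp add: W_def dot_Diff_singleton algebra_simps)
qed

lemma spec_radius_Diff_singleton_ge:
  assumes "simple_graph V E" and u: "u \<in> V" and "card V \<ge> 2"
    and eig: "\<And>v. v \<in> V \<Longrightarrow> adj_mult V E x v = mu * x v" and unit: "(\<Sum>v\<in>V. (x v)\<^sup>2) = 1"
  shows "mu * (1 - 2 * (x u)\<^sup>2) \<le> spec_radius (V - {u}) E * (1 - (x u)\<^sup>2)"
proof -
  have fin: "finite V" and sym: "\<forall>v\<in>V. \<forall>w\<in>V. E v w \<longleftrightarrow> E w v" and "\<not> E u u"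
    using assms(1) u unfolding simple_graph_def by auto
  have "card (V - {u}) > 0" using fin u \<open>card V \<ge> 2\<close> by simp
  then have "V - {u} \<noteq> {}" by (simp add: card_gt_0_iff)
  have "dot V x x = 1" using unit by (simp add: dot_def power2_eq_square)
  then have "adj_form (V - {u}) E x = mu * (1 - 2 * (x u)\<^sup>2)" and "dot (V - {u}) x x = 1 - (x u)\<^sup>2"
    using adj_form_Diff_singleton[OF fin u sym \<open>\<not> E u u\<close> eig] dot_Diff_singleton[OF fin u]
    by simp_all
  with adj_form_le_spec_radius[of "V - {u}" E x] fin sym \<open>V - {u} \<noteq> {}\<close> show ?thesis by simp
qed

lemma vertex_deletion_bound:
  fixes mu r s D :: real
  assumes "0 < D" and "0 \<le> s" and "s * (D + 1) \<le> 1" and "0 \<le> mu"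
    and "mu * (1 - 2 * s) \<le> r * (1 - s)"
  shows "mu * (1 - 1 / D) \<le> r"
proof -
  have "s < 1"
  proof (rule ccontr)
    assume "\<not> s < 1"
    then have "D \<le> s * D" using mult_right_mono[of 1 s D] \<open>0 < D\<close> by simp
    moreover have "s * (D + 1) = s * D + s" by (simp add: distrib_left)
    ultimately show False using assms(1,3) \<open>\<not> s < 1\<close> by linarith
  qed
  have "(1 - 1 / D) * (1 - s) - (1 - 2 * s) = (s * (D + 1) - 1) / D"
    using \<open>0 < D\<close> by (simp add: field_simps)
  also have "\<dots> \<le> 0" using assms(1,3) by (simp add: divide_nonpos_pos)
  finally have "mu * ((1 - 1 / D) * (1 - s)) \<le> mu * (1 - 2 * s)"
    using \<open>0 \<le> mu\<close> by (intro mult_left_mono) auto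
  with assms(5) have "mu * (1 - 1 / D) * (1 - s) \<le> r * (1 - s)" by (simp add: mult.assoc)
  then show ?thesis using \<open>s < 1\<close> by simp
qed

theorem lemma3:
  fixes V :: "'a set" and E :: "'a \<Rightarrow> 'a \<Rightarrow> bool" and x :: "'a \<Rightarrow> real" and u :: 'a
  assumes "simple_graph V E"
    and "min_degree V E \<ge> 1"
    and "\<forall>v\<in>V. x v \<ge> 0"
    and "(\<Sum>v\<in>V. (x v)\<^sup>2) = 1"
    and "is_eigenvector V E (spec_radius V E) x"
    and "u \<in> V" and "x u = Min (x ` V)"
  shows "spec_radius (V - {u}) E \<ge>
    spec_radius V E * (1 - 1 / ((spec_radius V E)\<^sup>2 / real (min_degree V E)
       + real (card V) - real (min_degree V E) - 1))"
proof -
  have fin: "finite V" and ne: "V \<noteq> {}" and irrefl: "\<forall>v\<in>V. \<not> E v v"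
    using assms(1) unfolding simple_graph_def by auto
  define mu d n t where "mu = spec_radius V E" and "d = min_degree V E"
    and "n = card V" and "t = x u"
  have eig: "\<And>v. v \<in> V \<Longrightarrow> adj_mult V E x v = mu * x v"
    using assms(5) unfolding is_eigenvector_def mu_def by auto
  have t: "0 \<le> t" "\<And>v. v \<in> V \<Longrightarrow> t \<le> x v"
    using assms(3,6,7) fin by (auto simp: t_def)
  obtain w where w: "w \<in> V" "degree V E w = d"
    using min_degree_attained[OF fin ne] unfolding d_def by metis
  have "d \<le> n - 1" using degree_le_card_minus_1[OF fin w(1), of E] irrefl w by (simp add: n_def)
  with assms(2) have "n \<ge> 2" "d \<ge> 1" by (auto simp: d_def)
  have "real d \<le> mu" using min_degree_le_spec_radius[OF assms(1)] by (simp add: d_def mu_def)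
  then have "mu\<^sup>2 / d \<ge> d" using \<open>d \<ge> 1\<close> by (simp add: power2_eq_square field_simps mult_mono)
  then have D: "mu\<^sup>2 / d + n - d - 1 > 0" using \<open>n \<ge> 2\<close> by linarith
  have key: "t\<^sup>2 * (mu\<^sup>2 / d + n - d - 1 + 1) \<le> 1"
    using min_entry_sq_bound[OF fin w(1) eig[OF w(1)] assms(4) t] w \<open>d \<ge> 1\<close> by (simp add: n_def)
  have R: "mu * (1 - 2 * t\<^sup>2) \<le> spec_radius (V - {u}) E * (1 - t\<^sup>2)"
    using spec_radius_Diff_singleton_ge[OF assms(1,6) _ eig assms(4)] \<open>n \<ge> 2\<close>
    by (simp add: t_def n_def)
  have "mu * (1 - 1 / (mu\<^sup>2 / d + n - d - 1)) \<le> spec_radius (V - {u}) E"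
    using \<open>real d \<le> mu\<close> by (intro vertex_deletion_bound[OF D _ key _ R]) auto
  then show ?thesis unfolding mu_def d_def n_def .
qed

end
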